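(* Let $n$ be an even positive integer, let $V_0=\{v\in\{-1,1\}^n : v_1=1,\ \sum_i v_i=0\}$, let $P(V_0)=\{\sum_{v\in W}v : W\subseteq V_0\}$, and let $g(V_0)=\frac12\sum_{v\in V_0}v$. (1) If $n$ is not a power of $2$, then $g(V_0)\in P(V_0)$. (2) If $n$ is a power of $2$ and $n>2$, let $w\in\mathbb{Z}^n$ be given by $w_i=1$ if $i\not\equiv 0\pmod 4$ and $w_i=-3$ if $i\equiv 0\pmod 4$. Then $g(V_0)-\frac12 w\in P(V_0)$. *)

theory Defs
  imports Complex_Main
begin

text \<open>Vectors in R^n are represented as functions nat => real indexed by 1..n,
  equal to 0 outside {1..n}.\<close>

definition V0 :: "nat \<Rightarrow> (nat \<Rightarrow> real) set" where
  "V0 n = {v. (\<forall>i\<in>{1..n}. v i = 1 \<or> v i = -1) \<and> (\<forall>i. i \<notin> {1..n} \<longrightarrow> v i = 0)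
              \<and> v 1 = 1 \<and> (\<Sum>i=1..n. v i) = 0}"

definition PV0 :: "nat \<Rightarrow> (nat \<Rightarrow> real) set" where
  "PV0 n = {x. \<exists>W \<subseteq> V0 n. x = (\<lambda>i. \<Sum>v\<in>W. v i)}"

definition gV0 :: "nat \<Rightarrow> (nat \<Rightarrow> real)" where
  "gV0 n = (\<lambda>i. (1/2) * (\<Sum>v\<in>V0 n. v i))"

definition wvec :: "nat \<Rightarrow> (nat \<Rightarrow> real)" where
  "wvec n = (\<lambda>i. if i \<in> {1..n} then (if i mod 4 = 0 then -3 else 1) else 0)"

end

theory Submission
  imports Defs "HOL-Combinatorics.Permutations" "HOL-Library.Disjoint_Sets"
begin

(*
  Call sigma an odd signing of length n if it assigns a sign to every balanced
  +-1 vector v of length n (entries summing to 0) with sigma (-v) = - sigma v,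
  and let S = sum of sigma v * v over all balanced v.  Taking W = {v in V0. sigma v = 1},
  every balanced vector is +-1 times an element of V0, whence sum of W = g(V0) + S / 4.
  So it suffices to find an odd signing with S = 0 when n is not a power of 2, and
  with S = -2 w when n = 2^k >= 4.

  For odd n there are no balanced vectors, and for n = 4 the signing v |-> v_4 works.
  An odd signing sigma of length m >= 3 with sum S lifts to length 2 m with sum (S, S).
  Group the coordinates into the pairs (b, b + m) and call a pair mixed if its two
  entries differ.  If no pair is mixed, v = (y, y) and we use sigma y.  If at least two
  pairs are mixed, we use v_p v_q v_j, with p, q the least and greatest mixed pair and
  j any other pair: for each coordinate, flipping one of the pairs p, q that does not
  contain it is a sign-reversing involution fixing that coordinate.  If exactly one pair
  a is mixed, we use v_(a-1) (cyclically); this is invariant under the cyclic rotation of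
  all 2 m coordinates, so its contribution is a constant vector with coordinate sum 0.
*)

definition balanced :: "nat \<Rightarrow> (nat \<Rightarrow> real) set" where
  "balanced n = {v. (\<forall>i\<in>{1..n}. v i \<in> {-1, 1}) \<and> (\<forall>i. i \<notin> {1..n} \<longrightarrow> v i = 0)
                    \<and> (\<Sum>i=1..n. v i) = 0}"

lemma balancedI:
  assumes "\<And>i. i \<in> {1..n} \<Longrightarrow> v i \<in> {-1, 1}" "\<And>i. i \<notin> {1..n} \<Longrightarrow> v i = 0"
    and "(\<Sum>i=1..n. v i) = 0"
  shows "v \<in> balanced n"
  using assms unfolding balanced_def by blast

lemma balancedD:
  assumes "v \<in> balanced n"
  shows balanced_in_pm1: "i \<in> {1..n} \<Longrightarrow> v i \<in> {-1, 1}"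
    and balanced_outside: "i \<notin> {1..n} \<Longrightarrow> v i = 0"
    and balanced_sum: "(\<Sum>i=1..n. v i) = 0"
  using assms unfolding balanced_def by blast+

lemma finite_balanced: "finite (balanced n)"
proof (rule finite_subset)
  show "balanced n \<subseteq> {v. \<forall>i. (i \<in> {1..n} \<longrightarrow> v i \<in> {-1, 1}) \<and> (i \<notin> {1..n} \<longrightarrow> v i = 0)}"
    unfolding balanced_def by blast
  show "finite \<dots>"
    by (rule finite_set_of_finite_funs) auto
qed

lemma uminus_balanced: "v \<in> balanced n \<Longrightarrow> - v \<in> balanced n"
  unfolding balanced_def by (auto simp: sum_negf)

lemma balanced_comp_permutes:
  assumes "\<pi> permutes {1..n}" and v: "v \<in> balanced n"
  shows "v \<circ> \<pi> \<in> balanced n"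
proof (rule balancedI)
  show "(\<Sum>i=1..n. (v \<circ> \<pi>) i) = 0"
    using sum.permute[OF assms(1), of v] balanced_sum[OF v] by simp
qed (use assms permutes_in_image[OF assms(1)] permutes_not_in[OF assms(1)] balancedD[OF v] in auto)

lemma even_if_balanced:
  assumes v: "v \<in> balanced n"
  shows "even n"
proof -
  have "0 = (\<Sum>i=1..n. v i)" using balanced_sum[OF v] ..
  also have "\<dots> = (\<Sum>i=1..n. 2 * of_bool (v i = 1) - 1)"
    using balanced_in_pm1[OF v] by (intro sum.cong) auto
  also have "\<dots> = 2 * card ({1..n} \<inter> {i. v i = 1}) - real n"
    by (simp add: sum_subtractf sum_distrib_left[symmetric])
  finally have "n = 2 * card ({1..n} \<inter> {i. v i = 1})"
    by linarith
  then show ?thesis by (rule dvdI)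
qed

lemma V0_eq: "V0 n = {v \<in> balanced n. v 1 = 1}"
  unfolding V0_def balanced_def by auto

definition odd_signing :: "nat \<Rightarrow> ((nat \<Rightarrow> real) \<Rightarrow> real) \<Rightarrow> bool" where
  "odd_signing n \<sigma> \<longleftrightarrow> (\<forall>v\<in>balanced n. \<sigma> v \<in> {-1, 1} \<and> \<sigma> (- v) = - \<sigma> v)"

definition signed_sum :: "nat \<Rightarrow> ((nat \<Rightarrow> real) \<Rightarrow> real) \<Rightarrow> nat \<Rightarrow> real" where
  "signed_sum n \<sigma> i = (\<Sum>v\<in>balanced n. \<sigma> v * v i)"

lemma V0_subset_balanced: "V0 n \<subseteq> balanced n"
  by (simp add: V0_eq)

lemma signed_sum_eq_twice_sum_V0:
  assumes \<sigma>: "odd_signing n \<sigma>" and "0 < n"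
  shows "signed_sum n \<sigma> i = 2 * (\<Sum>v\<in>V0 n. \<sigma> v * v i)"
proof -
  have first_coord: "v 1 \<in> {-1, 1}" if "v \<in> balanced n" for v
    using balanced_in_pm1[OF that] \<open>0 < n\<close> by simp
  have "signed_sum n \<sigma> i = (\<Sum>v\<in>V0 n. \<sigma> v * v i) + (\<Sum>v\<in>balanced n - V0 n. \<sigma> v * v i)"
    unfolding signed_sum_def
    by (simp add: sum.subset_diff[OF V0_subset_balanced finite_balanced] add.commute)
  also have "(\<Sum>v\<in>balanced n - V0 n. \<sigma> v * v i) = (\<Sum>v\<in>V0 n. \<sigma> v * v i)"
    by (rule sum.reindex_bij_witness[where i=uminus and j=uminus])
      (use \<sigma> first_coord in \<open>auto simp: V0_eq odd_signing_def uminus_balanced\<close>)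
  finally show ?thesis by simp
qed

lemma gV0_plus_signed_sum_in_PV0:
  assumes \<sigma>: "odd_signing n \<sigma>" and "0 < n"
  shows "(\<lambda>i. gV0 n i + signed_sum n \<sigma> i / 4) \<in> PV0 n"
proof -
  define W where "W = {v \<in> V0 n. \<sigma> v = 1}"
  have W_sub: "W \<subseteq> V0 n" unfolding W_def by blast
  have finite_V0: "finite (V0 n)" by (simp add: V0_eq finite_balanced)
  have "\<sigma> v * v i = of_bool (v \<in> W) * (2 * v i) - v i" if "v \<in> V0 n" for v i
    using \<sigma> that unfolding W_def odd_signing_def V0_eq by auto
  then have "(\<Sum>v\<in>V0 n. \<sigma> v * v i) = (\<Sum>v\<in>V0 n. of_bool (v \<in> W) * (2 * v i) - v i)" for i
    by (intro sum.cong) auto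
  also have "\<dots> i = 2 * (\<Sum>v\<in>W. v i) - 2 * gV0 n i" for i
    using finite_V0 W_sub
    by (simp add: sum_subtractf gV0_def sum_distrib_left[symmetric] Int_absorb1 Int_absorb2)
  finally have "(\<lambda>i. gV0 n i + signed_sum n \<sigma> i / 4) = (\<lambda>i. \<Sum>v\<in>W. v i)"
    using signed_sum_eq_twice_sum_V0[OF assms] by (simp add: fun_eq_iff field_simps)
  with W_sub show ?thesis unfolding PV0_def by blast
qed

definition vec4 :: "real \<times> real \<times> real \<times> real \<Rightarrow> nat \<Rightarrow> real" where
  "vec4 = (\<lambda>(a, b, c, d) i. if i = 1 then a else if i = 2 then b else if i = 3 then c
                             else if i = 4 then d else 0)"

lemma inj_vec4: "inj vec4"
proof (rule injI)
  fix x y assume "vec4 x = vec4 y"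
  then have "vec4 x i = vec4 y i" for i by simp
  from this[of 1] this[of 2] this[of 3] this[of 4] show "x = y"
    by (cases x; cases y) (simp add: vec4_def)
qed

lemma balanced_4:
  "balanced 4 = vec4 ` {(1,1,-1,-1), (1,-1,1,-1), (1,-1,-1,1), (-1,1,1,-1), (-1,1,-1,1), (-1,-1,1,1)}"
  (is "_ = vec4 ` ?T")
proof
  have four: "{1..4} = {1, 2, 3, 4 :: nat}" by auto
  show "balanced 4 \<subseteq> vec4 ` ?T"
  proof
    fix v assume v: "v \<in> balanced 4"
    have "v 1 + v 2 + v 3 + v 4 = 0"
      using balanced_sum[OF v] unfolding four by (simp add: add.assoc)
    moreover have "v 1 \<in> {-1, 1}" "v 2 \<in> {-1, 1}" "v 3 \<in> {-1, 1}" "v 4 \<in> {-1, 1}"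
      using balanced_in_pm1[OF v] by auto
    ultimately have "(v 1, v 2, v 3, v 4) \<in> ?T"
      by (elim insertE emptyE; simp)
    moreover have "v = vec4 (v 1, v 2, v 3, v 4)"
      using balanced_outside[OF v] by (auto simp: vec4_def)
    ultimately show "v \<in> vec4 ` ?T" by blast
  qed
  show "vec4 ` ?T \<subseteq> balanced 4"
    unfolding balanced_def four by (auto simp: vec4_def)
qed

lemma signed_sum_4: "signed_sum 4 (\<lambda>v. v 4) = (\<lambda>i. -2 * wvec 4 i)"
proof
  fix i
  show "signed_sum 4 (\<lambda>v. v 4) i = -2 * wvec 4 i"
    unfolding signed_sum_def balanced_4 sum.reindex[OF inj_on_subset[OF inj_vec4 subset_UNIV]]
    by (simp add: vec4_def wvec_def)
qed

lemma odd_signing_4: "odd_signing 4 (\<lambda>v. v 4)"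
  using balanced_in_pm1[of _ 4 4] by (simp add: odd_signing_def)

definition rot_idx :: "nat \<Rightarrow> nat \<Rightarrow> nat" where
  "rot_idx n j = (if j = 1 then n else if j \<le> n then j - 1 else j)"

lemma rot_idx_permutes:
  assumes "0 < n"
  shows "rot_idx n permutes {1..n}"
proof (rule bij_imp_permutes)
  show "bij_betw (rot_idx n) {1..n} {1..n}"
    by (rule bij_betw_byWitness[where f' = "\<lambda>j. if j = n then 1 else Suc j"])
      (use assms in \<open>auto simp: rot_idx_def\<close>)
  show "rot_idx n j = j" if "j \<notin> {1..n}" for j
    using that assms by (auto simp: rot_idx_def)
qed

lemma rot_idx_in: "j \<in> {1..n} \<Longrightarrow> rot_idx n j \<in> {1..n}"
  by (auto simp: rot_idx_def)

lemma rot_idx_invariant_imp_const: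
  assumes "\<And>j. T (rot_idx n j) = T j" and "j \<in> {1..n}"
  shows "T j = T 1"
  using assms(2)
proof (induction j)
  case (Suc j)
  show ?case
  proof (cases "j = 0")
    case False
    with Suc.prems have "rot_idx n (Suc j) = j" "j \<in> {1..n}"
      by (auto simp: rot_idx_def)
    with Suc.IH assms(1)[of "Suc j"] show ?thesis
      by simp
  qed simp
qed simp

lemma sum_weighted_comp_invariant:
  fixes f :: "('a \<Rightarrow> 'b) \<Rightarrow> 'b::comm_semiring_0"
  assumes "finite R" "surj \<pi>" "\<And>v. v \<in> R \<Longrightarrow> v \<circ> \<pi> \<in> R" "\<And>v. v \<in> R \<Longrightarrow> f (v \<circ> \<pi>) = f v"
  shows "(\<Sum>v\<in>R. f v * v (\<pi> i)) = (\<Sum>v\<in>R. f v * v i)"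
proof -
  have inj: "inj_on (\<lambda>v. v \<circ> \<pi>) R"
  proof (rule inj_onI)
    fix x y :: "'a \<Rightarrow> 'b" assume "x \<circ> \<pi> = y \<circ> \<pi>"
    then show "x = y"
      by (intro surj_fun_eq[OF assms(2)]) simp
  qed
  have "(\<lambda>v. v \<circ> \<pi>) ` R = R"
    using endo_inj_surj[OF assms(1) _ inj] assms(3) by blast
  then have "(\<Sum>v\<in>R. f v * v i) = (\<Sum>v\<in>(\<lambda>v. v \<circ> \<pi>) ` R. f v * v i)"
    by simp
  also have "\<dots> = (\<Sum>v\<in>R. f v * v (\<pi> i))"
    using assms(4) by (simp add: sum.reindex[OF inj])
  finally show ?thesis ..
qed

lemma sum_rotation_invariant_eq_0:
  assumes "0 < n" "R \<subseteq> balanced n"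
    and "\<And>v. v \<in> R \<Longrightarrow> v \<circ> rot_idx n \<in> R" "\<And>v. v \<in> R \<Longrightarrow> f (v \<circ> rot_idx n) = f v"
  shows "(\<Sum>v\<in>R. f v * v i) = 0"
proof -
  define T where "T i = (\<Sum>v\<in>R. f v * v i)" for i
  have fin: "finite R"
    using finite_subset[OF assms(2) finite_balanced] .
  have T_rot: "T (rot_idx n j) = T j" for j
    unfolding T_def
    by (rule sum_weighted_comp_invariant[OF fin permutes_surj[OF rot_idx_permutes[OF assms(1)]]])
      (use assms in auto)
  have T_const: "T j = T 1" if "j \<in> {1..n}" for j
    by (rule rot_idx_invariant_imp_const[where T = T, OF T_rot that])
  have "real n * T 1 = (\<Sum>j=1..n. T 1)"
    by simp
  also have "\<dots> = (\<Sum>j=1..n. T j)"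
    by (rule sum.cong[OF refl T_const[symmetric]])
  also have "\<dots> = (\<Sum>v\<in>R. f v * (\<Sum>j=1..n. v j))"
    unfolding T_def sum_distrib_left by (rule sum.swap)
  also have "\<dots> = 0"
    by (intro sum.neutral ballI) (use balanced_sum subsetD[OF assms(2)] in auto)
  finally have T1: "T 1 = 0"
    using assms(1) by simp
  show ?thesis
  proof (cases "i \<in> {1..n}")
    case True
    then have "T i = 0"
      using T_const[OF True] T1 by simp
    then show ?thesis
      unfolding T_def .
  next
    case False
    then show ?thesis
      by (intro sum.neutral ballI) (use balanced_outside subsetD[OF assms(2)] in auto)
  qed
qed

lemma sum_halves:
  fixes f :: "nat \<Rightarrow> 'a::comm_monoid_add"
  shows "(\<Sum>i=1..2*m. f i) = (\<Sum>i=1..m. f i) + (\<Sum>i=1..m. f (i + m))"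
proof -
  have "(\<Sum>i=1..m + m. f i) = (\<Sum>i=1..m. f i) + (\<Sum>i=m+1..m+m. f i)"
    by (rule sum.ub_add_nat[where m = 1 and n = m and p = m]) simp
  also have "(\<Sum>i=m+1..m+m. f i) = (\<Sum>i=1..m. f (i + m))"
    using sum.shift_bounds_cl_nat_ivl[of f 1 m m] by (simp add: add.commute)
  finally show ?thesis by (simp add: mult_2)
qed

definition mixed :: "nat \<Rightarrow> (nat \<Rightarrow> real) \<Rightarrow> nat set" where
  "mixed m v = {b \<in> {1..m}. v (b + m) \<noteq> v b}"

definition flip_pair :: "nat \<Rightarrow> nat \<Rightarrow> (nat \<Rightarrow> real) \<Rightarrow> nat \<Rightarrow> real" where
  "flip_pair m b v j = (if j = b \<or> j = b + m then - v j else v j)"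

lemma mixed_subset: "mixed m v \<subseteq> {1..m}"
  unfolding mixed_def by blast

lemma finite_mixed [simp]: "finite (mixed m v)"
  using finite_subset[OF mixed_subset] by blast

lemma mixed_uminus [simp]: "mixed m (- v) = mixed m v"
  unfolding mixed_def by auto

lemma balanced_pair_pm1:
  assumes "v \<in> balanced (2 * m)" "b \<in> {1..m}"
  shows "v b \<in> {-1, 1}" "v (b + m) \<in> {-1, 1}"
  using assms balanced_in_pm1[of v "2 * m"] by auto

lemma mixed_pair_opposite:
  assumes "v \<in> balanced (2 * m)" "b \<in> mixed m v"
  shows "v (b + m) = - v b"
  using assms balanced_pair_pm1[OF assms(1)] unfolding mixed_def by fastforce

lemma mixed_flip_pair: "b \<in> {1..m} \<Longrightarrow> mixed m (flip_pair m b v) = mixed m v"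
  unfolding mixed_def flip_pair_def by auto

lemma flip_pair_flip_pair [simp]: "flip_pair m b (flip_pair m b v) = v"
  unfolding flip_pair_def by auto

lemma flip_pair_balanced:
  assumes v: "v \<in> balanced (2 * m)" and b: "b \<in> mixed m v"
  shows "flip_pair m b v \<in> balanced (2 * m)"
proof (rule balancedI)
  have b_range: "b \<in> {1..2 * m}" "b + m \<in> {1..2 * m}" "b \<noteq> b + m"
    using b mixed_subset by fastforce+
  have "flip_pair m b v = (\<lambda>j. v j - (if j = b then 2 * v b else 0) - (if j = b + m then 2 * v (b + m) else 0))"
    unfolding flip_pair_def using b_range(3) by (auto simp: fun_eq_iff)
  then show "(\<Sum>j=1..2 * m. flip_pair m b v j) = 0"
    using b_range balanced_sum[OF v] mixed_pair_opposite[OF v b] by (simp add: sum_subtractf)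
qed (use balancedD[OF v] in \<open>auto simp: flip_pair_def\<close>)

lemma Min_less_Max_if_two_le_card:
  fixes M :: "'a::linorder set"
  assumes "finite M" "2 \<le> card M"
  shows "Min M < Max M"
proof -
  obtain a b where "a \<in> M" "b \<in> M" "a < b"
    using assms card_le_Suc0_iff_eq[OF assms(1)] by (auto simp: neq_iff)
  then show ?thesis
    using Min_le[OF assms(1)] Max_ge[OF assms(1)] by (meson le_less_trans less_le_trans)
qed

definition spare :: "nat \<Rightarrow> nat set \<Rightarrow> nat" where
  "spare m M = Min ({1..m} - {Min M, Max M})"

lemma spare_in:
  assumes "3 \<le> m"
  shows "spare m M \<in> {1..m} - {Min M, Max M}"
proof -
  have "\<not> {1..m} \<subseteq> {Min M, Max M}"
    using card_mono[of "{Min M, Max M}" "{1..m}"] card_insert_le_m1[of 2 "{Max M}" "Min M"] assms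
    by auto
  then show ?thesis
    unfolding spare_def by (intro Min_in) auto
qed

definition first_half :: "nat \<Rightarrow> (nat \<Rightarrow> real) \<Rightarrow> nat \<Rightarrow> real" where
  "first_half m v i = (if i \<le> m then v i else 0)"

definition double_vec :: "nat \<Rightarrow> (nat \<Rightarrow> real) \<Rightarrow> nat \<Rightarrow> real" where
  "double_vec m y i = (if i \<le> m then y i else if i \<le> 2 * m then y (i - m) else 0)"

lemma double_vec_balanced:
  assumes y: "y \<in> balanced m"
  shows "double_vec m y \<in> balanced (2 * m)"
proof (rule balancedI)
  have "(\<Sum>i=1..2 * m. double_vec m y i) = (\<Sum>i=1..m. y i) + (\<Sum>i=1..m. y i)"
    unfolding sum_halves by (intro arg_cong2[where f = "(+)"] sum.cong) (auto simp: double_vec_def)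
  then show "(\<Sum>i=1..2 * m. double_vec m y i) = 0"
    using balanced_sum[OF y] by simp
  show "double_vec m y i \<in> {-1, 1}" if i: "i \<in> {1..2 * m}" for i
  proof (cases "i \<le> m")
    case True
    then show ?thesis
      using i balanced_in_pm1[OF y, of i] by (simp add: double_vec_def)
  next
    case False
    then have "i - m \<in> {1..m}"
      using i by auto
    then show ?thesis
      using False i balanced_in_pm1[OF y] by (simp add: double_vec_def)
  qed
  show "double_vec m y i = 0" if "i \<notin> {1..2 * m}" for i
    using that balanced_outside[OF y] by (auto simp: double_vec_def)
qed

lemma mixed_double_vec: "mixed m (double_vec m y) = {}"
  by (auto simp: mixed_def double_vec_def)

lemma first_half_double_vec: "y \<in> balanced m \<Longrightarrow> first_half m (double_vec m y) = y"
  using balanced_outside[of y m] by (auto simp: fun_eq_iff first_half_def double_vec_def)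

lemma unmixed_balanced:
  assumes v: "v \<in> balanced (2 * m)" and unmixed: "mixed m v = {}"
  shows "first_half m v \<in> balanced m" and "double_vec m (first_half m v) = v"
proof -
  have pure: "v (b + m) = v b" if "b \<in> {1..m}" for b
    using that unmixed unfolding mixed_def by blast
  have "(\<Sum>i=1..2 * m. v i) = (\<Sum>i=1..m. v i) + (\<Sum>i=1..m. v i)"
    unfolding sum_halves using pure by (intro arg_cong2[where f = "(+)"] refl sum.cong) auto
  then show "first_half m v \<in> balanced m"
    using balancedD[OF v] by (intro balancedI) (auto simp: first_half_def)
  show "double_vec m (first_half m v) = v"
  proof
    fix j
    show "double_vec m (first_half m v) j = v j"
      using pure[of "j - m"] balanced_outside[OF v, of j]
      by (cases "j \<le> m") (auto simp: double_vec_def first_half_def)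
  qed
qed

definition lift_sign :: "nat \<Rightarrow> ((nat \<Rightarrow> real) \<Rightarrow> real) \<Rightarrow> (nat \<Rightarrow> real) \<Rightarrow> real" where
  "lift_sign m \<sigma> v =
     (if 2 \<le> card (mixed m v)
      then v (Min (mixed m v)) * v (Max (mixed m v)) * v (spare m (mixed m v))
      else if card (mixed m v) = 1 then v (rot_idx m (the_elem (mixed m v)))
      else \<sigma> (first_half m v))"

lemma lift_sign_flip_pair:
  assumes "3 \<le> m" and M: "2 \<le> card (mixed m v)" and b: "b \<in> {Min (mixed m v), Max (mixed m v)}"
  shows "lift_sign m \<sigma> (flip_pair m b v) = - lift_sign m \<sigma> v"
proof -
  let ?M = "mixed m v"
  have Min_Max: "Min ?M \<in> ?M" "Max ?M \<in> ?M" "Min ?M \<noteq> Max ?M"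
    using M Min_less_Max_if_two_le_card[OF finite_mixed M] by (auto intro!: Min_in Max_in)
  then have "b \<in> {1..m}" "Min ?M \<in> {1..m}" "Max ?M \<in> {1..m}"
    using b mixed_subset by blast+
  moreover note spare_in[OF \<open>3 \<le> m\<close>, of ?M]
  ultimately show ?thesis
    using M b Min_Max(3) by (auto simp: lift_sign_def mixed_flip_pair flip_pair_def)
qed

lemma sum_many_mixed_eq_0:
  assumes "3 \<le> m"
  shows "(\<Sum>v\<in>{v \<in> balanced (2 * m). 2 \<le> card (mixed m v)}. lift_sign m \<sigma> v * v i) = 0"
proof (rule sum_involution_eq_0)
  define c where "c = (if i \<le> m then i else i - m)"
  define b where "b v = (if c = Min (mixed m v) then Max (mixed m v) else Min (mixed m v))" for v
  let ?A = "{v \<in> balanced (2 * m). 2 \<le> card (mixed m v)}"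
  let ?h = "\<lambda>v. flip_pair m (b v) v"
  fix v assume "v \<in> ?A"
  then have v: "v \<in> balanced (2 * m)" and M: "2 \<le> card (mixed m v)" by auto
  have b_mixed: "b v \<in> mixed m v" and "b v \<noteq> c"
    using M Min_less_Max_if_two_le_card[OF finite_mixed M] unfolding b_def
    by (auto intro!: Min_in Max_in)
  have b_range: "b v \<in> {1..m}"
    using b_mixed mixed_subset by blast
  have "i \<noteq> b v" "i \<noteq> b v + m"
    using \<open>b v \<noteq> c\<close> b_range unfolding c_def by auto
  have mixed_h: "mixed m (?h v) = mixed m v"
    by (rule mixed_flip_pair[OF b_range])
  have "b (?h v) = b v"
    by (simp only: b_def[of "?h v"] mixed_h) (simp add: b_def)
  then show "?h (?h v) = v"
    by simp
  show "?h v \<in> ?A"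
    using flip_pair_balanced[OF v b_mixed] mixed_h M by simp
  have "?h v (b v) \<noteq> v (b v)"
    using balanced_pair_pm1[OF v b_range] by (auto simp: flip_pair_def)
  then show "?h v \<noteq> v"
    by metis
  have "b v \<in> {Min (mixed m v), Max (mixed m v)}"
    unfolding b_def by simp
  from lift_sign_flip_pair[OF assms M this] \<open>i \<noteq> b v\<close> \<open>i \<noteq> b v + m\<close>
  show "lift_sign m \<sigma> (?h v) * ?h v i + lift_sign m \<sigma> v * v i = 0"
    by (simp add: flip_pair_def)
qed

lemma rot_idx_double:
  assumes "b \<in> {1..m}"
  shows "rot_idx (2 * m) b = (if b = 1 then rot_idx m b + m else rot_idx m b)"
    and "rot_idx (2 * m) (b + m) = (if b = 1 then rot_idx m b else rot_idx m b + m)"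
  using assms by (auto simp: rot_idx_def)

lemma mixed_rotate: "mixed m (v \<circ> rot_idx (2 * m)) = {b \<in> {1..m}. rot_idx m b \<in> mixed m v}"
proof -
  have "v (rot_idx (2 * m) (b + m)) \<noteq> v (rot_idx (2 * m) b) \<longleftrightarrow> v (rot_idx m b + m) \<noteq> v (rot_idx m b)"
    if "b \<in> {1..m}" for b
    using rot_idx_double[OF that] by auto
  then show ?thesis
    unfolding mixed_def using rot_idx_in by auto
qed

lemma mixed_rotate_singleton:
  assumes "0 < m" "mixed m v = {a}"
  shows "mixed m (v \<circ> rot_idx (2 * m)) = {inv (rot_idx m) a}"
proof -
  note perm = rot_idx_permutes[OF assms(1)]
  have "a \<in> {1..m}"
    using assms(2) mixed_subset by blast
  then have "inv (rot_idx m) a \<in> {1..m}"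
    using permutes_in_image[OF permutes_inv[OF perm]] by blast
  then show ?thesis
    unfolding mixed_rotate assms(2) using permutes_inverses[OF perm] by auto
qed

lemma lift_sign_rotate:
  assumes "2 \<le> m" "mixed m v = {a}"
  shows "lift_sign m \<sigma> (v \<circ> rot_idx (2 * m)) = lift_sign m \<sigma> v"
proof -
  have a: "a \<in> {1..m}"
    using assms(2) mixed_subset by blast
  have "lift_sign m \<sigma> (v \<circ> rot_idx (2 * m)) = v (rot_idx (2 * m) a)"
    using mixed_rotate_singleton[of m v a] assms permutes_inverses(1)[OF rot_idx_permutes]
    by (simp add: lift_sign_def)
  also have "\<dots> = v (rot_idx m a)"
  proof (cases "a = 1")
    case True
    \<comment> \<open>the rotation carries pair m onto pair 1 with its halves swapped; pair m is not mixed\<close>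
    then have "rot_idx m a \<in> {1..m} - mixed m v"
      using assms by (auto simp: rot_idx_def)
    then show ?thesis
      using True rot_idx_double(1)[OF a] unfolding mixed_def by auto
  qed (use rot_idx_double(1)[OF a] in simp)
  also have "\<dots> = lift_sign m \<sigma> v"
    using assms(2) by (simp add: lift_sign_def)
  finally show ?thesis .
qed

lemma sum_one_mixed_eq_0:
  assumes "2 \<le> m"
  shows "(\<Sum>v\<in>{v \<in> balanced (2 * m). card (mixed m v) = 1}. lift_sign m \<sigma> v * v i) = 0"
proof (rule sum_rotation_invariant_eq_0)
  fix v assume "v \<in> {v \<in> balanced (2 * m). card (mixed m v) = 1}"
  then obtain a where v: "v \<in> balanced (2 * m)" and a: "mixed m v = {a}"
    by (auto simp: card_1_singleton_iff)
  show "v \<circ> rot_idx (2 * m) \<in> {v \<in> balanced (2 * m). card (mixed m v) = 1}"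
    using balanced_comp_permutes[OF rot_idx_permutes v] mixed_rotate_singleton[OF _ a] assms
    by simp
  show "lift_sign m \<sigma> (v \<circ> rot_idx (2 * m)) = lift_sign m \<sigma> v"
    by (rule lift_sign_rotate[OF assms a])
qed (use assms in auto)

lemma sum_unmixed:
  "(\<Sum>v\<in>{v \<in> balanced (2 * m). mixed m v = {}}. lift_sign m \<sigma> v * v i)
     = double_vec m (signed_sum m \<sigma>) i"
proof -
  have unmixed_eq: "{v \<in> balanced (2 * m). mixed m v = {}} = double_vec m ` balanced m"
  proof
    show "{v \<in> balanced (2 * m). mixed m v = {}} \<subseteq> double_vec m ` balanced m"
    proof
      fix v assume "v \<in> {v \<in> balanced (2 * m). mixed m v = {}}"
      then have v: "v \<in> balanced (2 * m)" and unmixed: "mixed m v = {}"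
        by auto
      show "v \<in> double_vec m ` balanced m"
        using unmixed_balanced[OF v unmixed] by (metis rev_image_eqI)
    qed
    show "double_vec m ` balanced m \<subseteq> {v \<in> balanced (2 * m). mixed m v = {}}"
      using double_vec_balanced mixed_double_vec by auto
  qed
  have inj: "inj_on (double_vec m) (balanced m)"
    by (rule inj_on_inverseI[where g = "first_half m"]) (rule first_half_double_vec)
  have "(\<Sum>v\<in>{v \<in> balanced (2 * m). mixed m v = {}}. lift_sign m \<sigma> v * v i)
      = (\<Sum>y\<in>balanced m. \<sigma> y * double_vec m y i)"
    unfolding unmixed_eq sum.reindex[OF inj]
    by (intro sum.cong refl) (simp add: lift_sign_def mixed_double_vec first_half_double_vec)
  also have "\<dots> = double_vec m (signed_sum m \<sigma>) i"
    by (simp add: double_vec_def signed_sum_def)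
  finally show ?thesis .
qed

lemma signed_sum_lift_sign:
  assumes "3 \<le> m"
  shows "signed_sum (2 * m) (lift_sign m \<sigma>) = double_vec m (signed_sum m \<sigma>)"
proof
  fix i
  let ?f = "\<lambda>v. lift_sign m \<sigma> v * v i"
  define A2 where "A2 = {v \<in> balanced (2 * m). 2 \<le> card (mixed m v)}"
  define A1 where "A1 = {v \<in> balanced (2 * m). card (mixed m v) = 1}"
  define A0 where "A0 = {v \<in> balanced (2 * m). card (mixed m v) = 0}"
  have "card (mixed m v) = 0 \<or> card (mixed m v) = 1 \<or> 2 \<le> card (mixed m v)" for v
    by linarith
  then have "balanced (2 * m) = A2 \<union> (A1 \<union> A0)"
    unfolding A2_def A1_def A0_def by blast
  moreover have "finite A2" "finite A1" "finite A0"
    unfolding A2_def A1_def A0_def by (simp_all add: finite_balanced)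
  moreover have "A2 \<inter> (A1 \<union> A0) = {}" "A1 \<inter> A0 = {}"
    unfolding A2_def A1_def A0_def by auto
  ultimately have "signed_sum (2 * m) (lift_sign m \<sigma>) i = sum ?f A2 + sum ?f A1 + sum ?f A0"
    unfolding signed_sum_def by (simp add: sum.union_disjoint)
  also have "\<dots> = double_vec m (signed_sum m \<sigma>) i"
    using sum_many_mixed_eq_0[OF assms] sum_one_mixed_eq_0[of m] sum_unmixed[of m \<sigma> i] assms
    unfolding A2_def A1_def A0_def by simp
  finally show "signed_sum (2 * m) (lift_sign m \<sigma>) i = double_vec m (signed_sum m \<sigma>) i" .
qed

lemma odd_signing_lift_sign:
  assumes "3 \<le> m" and \<sigma>: "odd_signing m \<sigma>"
  shows "odd_signing (2 * m) (lift_sign m \<sigma>)"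
  unfolding odd_signing_def
proof
  fix v assume v: "v \<in> balanced (2 * m)"
  let ?M = "mixed m v"
  have pm1: "v b \<in> {-1, 1}" if "b \<in> {1..m}" for b
    using balanced_pair_pm1(1)[OF v that] .
  consider "2 \<le> card ?M" | "card ?M = 1" | "card ?M = 0"
    by linarith
  then show "lift_sign m \<sigma> v \<in> {-1, 1} \<and> lift_sign m \<sigma> (- v) = - lift_sign m \<sigma> v"
  proof cases
    case 1
    then have "?M \<noteq> {}"
      by auto
    then have "Min ?M \<in> {1..m}" "Max ?M \<in> {1..m}"
      using mixed_subset Min_in[OF finite_mixed] Max_in[OF finite_mixed] by blast+
    then have "v (Min ?M) \<in> {-1, 1}" "v (Max ?M) \<in> {-1, 1}" "v (spare m ?M) \<in> {-1, 1}"
      using pm1 spare_in[OF assms(1), of ?M] by auto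
    with 1 show ?thesis
      by (auto simp: lift_sign_def)
  next
    case 2
    then obtain a where a: "?M = {a}"
      by (auto simp: card_1_singleton_iff)
    then have "v (rot_idx m a) \<in> {-1, 1}"
      using mixed_subset rot_idx_in pm1 by blast
    with a show ?thesis
      by (auto simp: lift_sign_def)
  next
    case 3
    then have unmixed: "?M = {}"
      by simp
    have "first_half m (- v) = - first_half m v"
      by (auto simp: fun_eq_iff first_half_def)
    with 3 \<sigma> unmixed_balanced(1)[OF v unmixed] show ?thesis
      by (auto simp: lift_sign_def odd_signing_def)
  qed
qed

lemma zero_signed_sum_if_not_pow2:
  assumes "0 < n" "\<nexists>k. n = 2 ^ k"
  shows "\<exists>\<sigma>. odd_signing n \<sigma> \<and> signed_sum n \<sigma> = (\<lambda>_. 0)"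
  using assms
proof (induction n rule: less_induct)
  case (less n)
  show ?case
  proof (cases "even n")
    case False
    then have "balanced n = {}"
      using even_if_balanced by blast
    then show ?thesis
      by (simp add: odd_signing_def signed_sum_def fun_eq_iff)
  next
    case True
    then obtain m where n: "n = 2 * m" ..
    have not_pow2: "\<nexists>k. m = 2 ^ k"
      using less.prems(2) unfolding n by (metis power_Suc)
    have "m \<noteq> 1" "m \<noteq> 2" "0 < m"
      using not_pow2 less.prems(1) n by (metis power_0, metis power_one_right, simp)
    then have m3: "3 \<le> m"
      by linarith
    obtain \<sigma> where \<sigma>: "odd_signing m \<sigma>" "signed_sum m \<sigma> = (\<lambda>_. 0)"
      using less.IH[of m] n \<open>0 < m\<close> not_pow2 by auto
    have "double_vec m (\<lambda>_. 0) = (\<lambda>_. 0)"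
      by (simp add: double_vec_def fun_eq_iff)
    then have "signed_sum n (lift_sign m \<sigma>) = (\<lambda>_. 0)"
      unfolding n signed_sum_lift_sign[OF m3] \<sigma>(2) .
    with odd_signing_lift_sign[OF m3 \<sigma>(1)] show ?thesis
      unfolding n by blast
  qed
qed

lemma double_vec_wvec:
  assumes "4 dvd m"
  shows "double_vec m (\<lambda>i. c * wvec m i) = (\<lambda>i. c * wvec (2 * m) i)"
proof
  fix i
  obtain q where q: "m = 4 * q"
    using assms ..
  have "i mod 4 = (i - m) mod 4" if "m < i"
  proof -
    have "i = (i - m) + 4 * q"
      using that q by simp
    then show ?thesis
      by (metis mod_mult_self2)
  qed
  then show "double_vec m (\<lambda>i. c * wvec m i) i = c * wvec (2 * m) i"
    by (cases "i \<le> m") (auto simp: double_vec_def wvec_def)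
qed

lemma wvec_signed_sum_pow2:
  assumes "2 \<le> k"
  shows "\<exists>\<sigma>. odd_signing (2 ^ k) \<sigma> \<and> signed_sum (2 ^ k) \<sigma> = (\<lambda>i. -2 * wvec (2 ^ k) i)"
  using assms
proof (induction k rule: dec_induct)
  case base
  show ?case
    using odd_signing_4 signed_sum_4 by auto
next
  case (step k)
  let ?m = "2 ^ k :: nat"
  obtain \<sigma> where \<sigma>: "odd_signing ?m \<sigma>" "signed_sum ?m \<sigma> = (\<lambda>i. -2 * wvec ?m i)"
    using step.IH by blast
  have "4 dvd ?m"
    using le_imp_power_dvd[OF step.hyps(1), of 2] by simp
  have m3: "3 \<le> ?m"
    using power_increasing[OF step.hyps(1), of "2 :: nat"] by simp
  have "signed_sum (2 * ?m) (lift_sign ?m \<sigma>) = (\<lambda>i. -2 * wvec (2 * ?m) i)"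
    unfolding signed_sum_lift_sign[OF m3] \<sigma>(2) by (rule double_vec_wvec[OF \<open>4 dvd ?m\<close>])
  with odd_signing_lift_sign[OF m3 \<sigma>(1)] show ?case
    unfolding power_Suc by blast
qed

theorem lemma4p3:
  fixes n :: nat
  assumes "even n" and "n > 0"
  shows "(\<not> (\<exists>k. n = 2 ^ k) \<longrightarrow> gV0 n \<in> PV0 n)
       \<and> ((\<exists>k. n = 2 ^ k) \<and> n > 2 \<longrightarrow> (\<lambda>i. gV0 n i - (1/2) * wvec n i) \<in> PV0 n)"
proof (intro conjI impI)
  assume "\<not> (\<exists>k. n = 2 ^ k)"
  then obtain \<sigma> where "odd_signing n \<sigma>" "signed_sum n \<sigma> = (\<lambda>_. 0)"
    using zero_signed_sum_if_not_pow2 assms(2) by blast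
  then show "gV0 n \<in> PV0 n"
    using gV0_plus_signed_sum_in_PV0[of n \<sigma>] assms(2) by simp
next
  assume "(\<exists>k. n = 2 ^ k) \<and> n > 2"
  then obtain k where n: "n = 2 ^ k" and "2 < n"
    by blast
  have "2 \<le> k"
  proof (rule ccontr)
    assume "\<not> 2 \<le> k"
    then have "n \<le> 2 ^ 1"
      unfolding n by (intro power_increasing) auto
    with \<open>2 < n\<close> show False
      by simp
  qed
  then obtain \<sigma> where \<sigma>: "odd_signing n \<sigma>" "signed_sum n \<sigma> = (\<lambda>i. -2 * wvec n i)"
    using wvec_signed_sum_pow2 unfolding n by blast
  have "(\<lambda>i. gV0 n i + signed_sum n \<sigma> i / 4) = (\<lambda>i. gV0 n i - (1/2) * wvec n i)"
    using \<sigma>(2) by (simp add: fun_eq_iff)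
  then show "(\<lambda>i. gV0 n i - (1/2) * wvec n i) \<in> PV0 n"
    using gV0_plus_signed_sum_in_PV0[OF \<sigma>(1) assms(2)] by simp
qed

end
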